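(* For real $\lambda$ such that the defining integrals converge absolutely (in particular for all $\lambda\ge0$), let $$I_n(\lambda)=\int_{0<x_1<\cdots<x_n<1}\prod_{1\le i<j\le n}|x_i-x_j|^{\lambda 2^{j-i}}\,dx,\qquad J_n(\lambda)=\int_{0<x_1<\cdots<x_n<1}\prod_{1\le i<j\le n}|x_i-x_j|^{\lambda 2^{n-(j-i)}}\,dx.$$ Then $$I_2(\lambda)=J_2(\lambda)=\frac{1}{(1+2\lambda)(2+2\lambda)},\qquad I_3(\lambda)=\frac{1}{(2+8\lambda)(3+8\lambda)}\frac{\Gamma(1+2\lambda)^2}{\Gamma(2+4\lambda)},$$ $$I_4(\lambda)=\frac{1}{(3+22\lambda)(4+22\lambda)}\frac{\Gamma(1+2\lambda)^2}{\Gamma(2+4\lambda)}\frac{\Gamma(1+2\lambda)\Gamma(2+8\lambda)}{\Gamma(3+10\lambda)}\,{}_3F_2(-4\lambda,1+2\lambda,2+8\lambda;2+4\lambda,3+10\lambda;1),$$ $$J_3(\lambda)=\frac{1}{(2+10\lambda)(3+10\lambda)}\frac{\Gamma(1+4\lambda)^2}{\Gamma(2+8\lambda)},$$ $$J_4(\lambda)=\frac{1}{(3+34\lambda)(4+34\lambda)}\frac{\Gamma(1+8\lambda)^2}{\Gamma(2+16\lambda)}\frac{\Gamma(1+8\lambda)\Gamma(2+20\lambda)}{\Gamma(3+28\lambda)}\,{}_3F_2(-4\lambda,1+8\lambda,2+20\lambda;2+16\lambda,3+28\lambda;1).$$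
   Context: ${}_3F_2(a_1,a_2,a_3;b_1,b_2;z)$ denotes the generalized hypergeometric function $\sum_{k\ge0}\frac{(a_1)_k(a_2)_k(a_3)_k}{(b_1)_k(b_2)_k}\frac{z^k}{k!}$. *)

theory Defs
  imports "HOL-Analysis.Analysis"
begin

text \<open>Points of R^n are represented as extensional functions on the index set {0..<n}
  (indices shifted from 1..n to 0..n-1), with the product Lebesgue measure.\<close>

definition cube_measure :: "nat \<Rightarrow> (nat \<Rightarrow> real) measure" where
  "cube_measure n = (\<Pi>\<^sub>M i\<in>{..<n}. lborel)"

definition ordered_simplex :: "nat \<Rightarrow> (nat \<Rightarrow> real) set" where
  "ordered_simplex n = {x \<in> space (cube_measure n).
      (\<forall>i<n. 0 < x i \<and> x i < 1) \<and> (\<forall>i j. i < j \<and> j < n \<longrightarrow> x i < x j)}"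

definition pair_weight :: "nat \<Rightarrow> (nat \<Rightarrow> nat \<Rightarrow> real) \<Rightarrow> (nat \<Rightarrow> real) \<Rightarrow> real" where
  "pair_weight n e x = (\<Prod>(i,j)\<in>{(i,j). i < j \<and> j < n}. \<bar>x i - x j\<bar> powr e i j)"

definition I_exp :: "real \<Rightarrow> nat \<Rightarrow> nat \<Rightarrow> nat \<Rightarrow> real" where
  "I_exp lam n i j = lam * 2 ^ (j - i)"

definition J_exp :: "real \<Rightarrow> nat \<Rightarrow> nat \<Rightarrow> nat \<Rightarrow> real" where
  "J_exp lam n i j = lam * 2 ^ (n - (j - i))"

definition simplex_integrable :: "nat \<Rightarrow> (nat \<Rightarrow> nat \<Rightarrow> real) \<Rightarrow> bool" where
  "simplex_integrable n e = set_integrable (cube_measure n) (ordered_simplex n) (pair_weight n e)"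

definition simplex_integral :: "nat \<Rightarrow> (nat \<Rightarrow> nat \<Rightarrow> real) \<Rightarrow> real" where
  "simplex_integral n e = (LINT x:ordered_simplex n|cube_measure n. pair_weight n e x)"

definition I_int :: "nat \<Rightarrow> real \<Rightarrow> real" where
  "I_int n lam = simplex_integral n (I_exp lam n)"

definition J_int :: "nat \<Rightarrow> real \<Rightarrow> real" where
  "J_int n lam = simplex_integral n (J_exp lam n)"

definition hyp3F2 :: "real \<Rightarrow> real \<Rightarrow> real \<Rightarrow> real \<Rightarrow> real \<Rightarrow> real \<Rightarrow> real" where
  "hyp3F2 a1 a2 a3 b1 b2 z =
     (\<Sum>k. pochhammer a1 k * pochhammer a2 k * pochhammer a3 k /
           (pochhammer b1 k * pochhammer b2 k) * z ^ k / fact k)"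

end

theory Submission
  imports Defs
begin

text \<open>Integrate the coordinates out one at a time. A coordinate y lying between two
  neighbours x_l < x_r, with weight (y - x_l)^p (x_r - y)^q times factors free of y,
  contributes (x_r - x_l)^(p+q+1) B(p+1, q+1); for n = 2, 3 this chain of Beta integrals
  closes up. For n = 4 the factor (x_3 - x_1)^c couples two non-neighbours; expanding
  ((x_3 - x_0) - (x_1 - x_0))^c binomially turns every term into another Beta chain, and
  writing the products of Beta values with Pochhammer symbols gives the 3F2 series.
  The binomial coefficients have eventually constant sign, so termwise integration
  follows from monotone convergence. All exponents are lambda times positive constants:
  for lambda < 0 the weight dominates (x_n - x_1) raised to the total exponent, so
  integrability forces the total exponent above 1 - n, which in turn makes every Beta
  parameter positive.\<close>

section \<open>Beta integrals\<close>

lemma nn_integral_inverse_diverges: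
  "(\<integral>\<^sup>+t. ennreal (indicator {0<..<1/2} t * (1/t)) \<partial>lborel) = \<infinity>"
proof (rule ccontr)
  assume "(\<integral>\<^sup>+t. ennreal (indicator {0<..<1/2} t * (1/t)) \<partial>lborel) \<noteq> \<infinity>"
  then obtain r where r: "(\<integral>\<^sup>+t. ennreal (indicator {0<..<1/2} t * (1/t)) \<partial>lborel) = ennreal r" "r \<ge> 0"
    by (metis ennreal_cases infinity_ennreal_def)
  define e :: real where "e = (1/4) * exp (-(r+1))"
  have e: "0 < e" "e < 1/4"
    using r(2) unfolding e_def by auto
  have "((\<lambda>t. 1/t) has_integral (ln (1/4) - ln e)) {e..1/4}"
    using e
    by (intro fundamental_theorem_of_calculus)
       (auto intro!: derivative_eq_intros simp flip: has_real_derivative_iff_has_vector_derivative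
             simp: field_simps)
  from nn_integral_has_integral_lebesgue[OF _ this] e
  have "(\<integral>\<^sup>+t. ennreal (indicator {e..1/4} t * (1/t)) \<partial>lborel) = ennreal (ln (1/4) - ln e)"
    by simp
  moreover have "(\<integral>\<^sup>+t. ennreal (indicator {e..1/4} t * (1/t)) \<partial>lborel)
        \<le> (\<integral>\<^sup>+t. ennreal (indicator {0<..<1/2} t * (1/t)) \<partial>lborel)"
    using e by (intro nn_integral_mono) (auto simp: indicator_def)
  ultimately have "ln (1/4) - ln e \<le> r"
    using r by simp
  moreover have "ln (1/4) - ln e = r + 1"
    unfolding e_def by (simp add: ln_div)
  ultimately show False by simp
qed

lemma nn_integral_Beta_unit_interval_diverges:
  fixes p q :: real
  assumes "p \<le> -1"
  shows "(\<integral>\<^sup>+t. ennreal (indicator {0<..<1} t * (t powr p * (1-t) powr q)) \<partial>lborel) = \<infinity>"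
proof -
  define m where "m = min 1 ((1/2) powr q)"
  have m: "m > 0" unfolding m_def by simp
  have bound: "m * (1/t) \<le> t powr p * (1-t) powr q" if t: "0 < t" "t < 1/2" for t
  proof -
    have "1/t = t powr (-1)" using t by (simp add: powr_minus_divide)
    also have "\<dots> \<le> t powr p" using t assms by (intro powr_mono') auto
    finally have "1/t \<le> t powr p" .
    moreover have "m \<le> (1-t) powr q"
    proof (cases "q \<ge> 0")
      case True
      have "(1/2) powr q \<le> (1-t) powr q" using t True by (intro powr_mono2) auto
      then show ?thesis unfolding m_def by linarith
    next
      case False
      have "(1-t) powr 0 \<le> (1-t) powr q" using t False by (intro powr_mono') auto
      then show ?thesis using t unfolding m_def by simp
    qed
    ultimately have "m * (1/t) \<le> (1-t) powr q * t powr p"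
      using m t by (intro mult_mono) auto
    then show ?thesis by (simp add: mult.commute)
  qed
  have "(\<integral>\<^sup>+t. ennreal (indicator {0<..<1/2} t * (1/t)) \<partial>lborel) * ennreal m
      = (\<integral>\<^sup>+t. ennreal (indicator {0<..<1/2} t * (1/t)) * ennreal m \<partial>lborel)"
    by (rule nn_integral_multc[symmetric]) measurable
  also have "\<dots> \<le> (\<integral>\<^sup>+t. ennreal (indicator {0<..<1} t * (t powr p * (1-t) powr q)) \<partial>lborel)"
  proof (intro nn_integral_mono)
    fix t :: real
    show "ennreal (indicator {0<..<1/2} t * (1/t)) * ennreal m
          \<le> ennreal (indicator {0<..<1} t * (t powr p * (1-t) powr q))"
      using bound[of t] m
      by (cases "0 < t \<and> t < 1/2")
         (auto simp: indicator_def ennreal_mult'[symmetric] mult.commute intro!: ennreal_leI)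
  qed
  finally show ?thesis
    using m nn_integral_inverse_diverges by (simp add: ennreal_top_mult top_unique)
qed

lemma nn_integral_Beta_unit_interval:
  fixes p q :: real
  shows "(\<integral>\<^sup>+t. ennreal (indicator {0<..<1} t * (t powr p * (1-t) powr q)) \<partial>lborel)
         = (if p > -1 \<and> q > -1 then ennreal (Beta (p+1) (q+1)) else \<infinity>)"
proof -
  have swap: "(\<integral>\<^sup>+t. ennreal (indicator {0<..<1} t * (t powr p * (1-t) powr q)) \<partial>lborel)
       = (\<integral>\<^sup>+t. ennreal (indicator {0<..<1} t * (t powr q * (1-t) powr p)) \<partial>lborel)"
  proof -
    have "(\<integral>\<^sup>+t. ennreal (indicator {0<..<1} t * (t powr p * (1-t) powr q)) \<partial>lborel)
       = ennreal \<bar>-1\<bar> * (\<integral>\<^sup>+t. ennreal (indicator {0<..<1} (1 + (-1) * t) *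
           ((1 + (-1) * t) powr p * (1 - (1 + (-1) * t)) powr q)) \<partial>lborel)"
      by (rule nn_integral_real_affine) auto
    also have "\<dots> = (\<integral>\<^sup>+t. ennreal (indicator {0<..<1} t * (t powr q * (1-t) powr p)) \<partial>lborel)"
      by (auto intro!: nn_integral_cong simp: indicator_def mult.commute)
    finally show ?thesis .
  qed
  consider "p > -1" "q > -1" | "p \<le> -1" | "q \<le> -1"
    by linarith
  then show ?thesis
  proof cases
    case 1
    then have "((\<lambda>t. t powr (p+1 - 1) * (1 - t) powr (q+1 - 1)) has_integral Beta (p+1) (q+1)) {0..1}"
      by (intro has_integral_Beta_real) auto
    then have "((\<lambda>t. t powr p * (1 - t) powr q) has_integral Beta (p+1) (q+1)) {0<..<1}"
      by (simp add: has_integral_Icc_iff_Ioo)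
    from nn_integral_has_integral_lebesgue[OF _ this] show ?thesis
      using 1 by simp
  next
    case 2
    then show ?thesis by (simp add: nn_integral_Beta_unit_interval_diverges)
  next
    case 3
    then show ?thesis by (simp add: swap nn_integral_Beta_unit_interval_diverges)
  qed
qed

lemma nn_integral_Beta_interval:
  fixes a b p q :: real
  assumes ab: "a < b"
  shows "(\<integral>\<^sup>+x. ennreal (indicator {a<..<b} x * ((x-a) powr p * (b-x) powr q)) \<partial>lborel)
         = (if p > -1 \<and> q > -1 then ennreal ((b-a) powr (p+q+1) * Beta (p+1) (q+1)) else \<infinity>)"
proof -
  let ?B = "\<integral>\<^sup>+x. ennreal (indicator {0<..<1} x * (x powr p * (1-x) powr q)) \<partial>lborel"
  have "(\<integral>\<^sup>+x. ennreal (indicator {a<..<b} x * ((x-a) powr p * (b-x) powr q)) \<partial>lborel)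
     = ennreal \<bar>b-a\<bar> * (\<integral>\<^sup>+x. ennreal (indicator {a<..<b} (a + (b-a)*x) *
         (((a + (b-a)*x) - a) powr p * (b - (a + (b-a)*x)) powr q)) \<partial>lborel)"
    using ab by (intro nn_integral_real_affine) auto
  also have "(\<integral>\<^sup>+x. ennreal (indicator {a<..<b} (a + (b-a)*x) *
         (((a + (b-a)*x) - a) powr p * (b - (a + (b-a)*x)) powr q)) \<partial>lborel)
     = (\<integral>\<^sup>+x. ennreal ((b-a) powr (p+q)) * ennreal (indicator {0<..<1} x * (x powr p * (1-x) powr q)) \<partial>lborel)"
  proof (intro nn_integral_cong)
    fix x :: real
    have lower: "a < a + (b-a)*x \<longleftrightarrow> 0 < x"
      using ab by (simp add: zero_less_mult_iff)
    have upper: "a + (b-a)*x < b \<longleftrightarrow> x < 1"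
      using ab mult_less_cancel_left_pos[of "b-a" x 1] by (simp add: algebra_simps)
    have "b - (a + (b-a)*x) = (b-a)*(1-x)"
      by (simp add: algebra_simps)
    then show "ennreal (indicator {a<..<b} (a + (b-a)*x) *
         (((a + (b-a)*x) - a) powr p * (b - (a + (b-a)*x)) powr q))
        = ennreal ((b-a) powr (p+q)) * ennreal (indicator {0<..<1} x * (x powr p * (1-x) powr q))"
      using lower upper ab
      by (auto simp: indicator_def powr_mult powr_add ennreal_mult'[symmetric] mult_ac)
  qed
  also have "\<dots> = ennreal ((b-a) powr (p+q)) * ?B"
    by (rule nn_integral_cmult) measurable
  finally have scaled: "(\<integral>\<^sup>+x. ennreal (indicator {a<..<b} x * ((x-a) powr p * (b-x) powr q)) \<partial>lborel)
      = ennreal (b-a) * (ennreal ((b-a) powr (p+q)) * ?B)"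
    using ab by simp
  show ?thesis
  proof (cases "p > -1 \<and> q > -1")
    case True
    have "(b-a) powr (p+q+1) = (b-a) * (b-a) powr (p+q)"
      using ab by (simp add: powr_add)
    moreover have "Beta (p+1) (q+1) > 0"
      unfolding Beta_def using True by simp
    ultimately show ?thesis
      unfolding scaled nn_integral_Beta_unit_interval using True ab
      by (simp add: ennreal_mult[symmetric] mult.assoc)
  next
    case False
    then show ?thesis
      unfolding scaled nn_integral_Beta_unit_interval if_not_P[OF False]
      using ab by (simp add: ennreal_mult_top)
  qed
qed

lemma nn_integral_Beta_kernel:
  fixes a b p q K :: real
  assumes "p > -1" "q > -1" "K \<ge> 0"
  shows "(\<integral>\<^sup>+y. ennreal (if P \<and> a < y \<and> y < b then K * ((y-a) powr p * (b-y) powr q) else 0) \<partial>lborel)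
       = ennreal (if P \<and> a < b then K * ((b-a) powr (p+q+1) * Beta (p+1) (q+1)) else 0)"
proof (cases "P \<and> a < b")
  case True
  have "(\<integral>\<^sup>+y. ennreal (if P \<and> a < y \<and> y < b then K * ((y-a) powr p * (b-y) powr q) else 0) \<partial>lborel)
      = (\<integral>\<^sup>+y. ennreal K * ennreal (indicator {a<..<b} y * ((y-a) powr p * (b-y) powr q)) \<partial>lborel)"
    using True assms by (intro nn_integral_cong) (auto simp: indicator_def ennreal_mult'[symmetric])
  also have "\<dots> = ennreal K * (\<integral>\<^sup>+y. ennreal (indicator {a<..<b} y * ((y-a) powr p * (b-y) powr q)) \<partial>lborel)"
    by (rule nn_integral_cmult) measurable
  also have "\<dots> = ennreal (K * ((b-a) powr (p+q+1) * Beta (p+1) (q+1)))"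
    using True assms by (simp add: nn_integral_Beta_interval ennreal_mult'[symmetric])
  finally show ?thesis
    using True by simp
next
  case False
  then have "(\<lambda>y. ennreal (if P \<and> a < y \<and> y < b then K * ((y-a) powr p * (b-y) powr q) else 0)) = (\<lambda>y. 0)"
    by auto
  then show ?thesis
    using False by auto
qed

lemma Beta_1_left:
  fixes s :: real
  assumes "s > 0"
  shows "Beta 1 s = 1/s"
proof -
  have "s \<notin> \<int>\<^sub>\<le>\<^sub>0"
    using assms by (auto elim!: nonpos_Ints_cases)
  then show ?thesis
    using Gamma_plus1[of s] Gamma_nonzero[of s] assms unfolding Beta_def by (simp add: add.commute field_simps)
qed

lemma nn_integral_powr_interval:
  fixes C r y :: real
  assumes "C > 0" "y > 0"
  shows "(\<integral>\<^sup>+x. ennreal (if 0 < x \<and> x < y then C * (y-x) powr r else 0) \<partial>lborel)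
       = (if r > -1 then ennreal (C / (r+1) * y powr (r+1)) else \<infinity>)"
proof -
  have "(\<integral>\<^sup>+x. ennreal (if 0 < x \<and> x < y then C * (y-x) powr r else 0) \<partial>lborel)
      = ennreal C * (\<integral>\<^sup>+x. ennreal (indicator {0<..<y} x * ((x-0) powr 0 * (y-x) powr r)) \<partial>lborel)"
    using assms
    by (subst nn_integral_cmult[symmetric], measurable)
       (auto intro!: nn_integral_cong simp: indicator_def ennreal_mult'[symmetric])
  also have "\<dots> = ennreal C * (if r > -1 then ennreal (y powr (r+1) * Beta 1 (r+1)) else \<infinity>)"
    using assms by (subst nn_integral_Beta_interval) (auto simp: add.commute)
  finally show ?thesis
    using assms by (auto simp: Beta_1_left ennreal_mult'[symmetric] ennreal_mult_top)
qed

lemma nn_integral_triangle_powr: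
  fixes C r :: real
  assumes C: "C > 0"
  shows "(\<integral>\<^sup>+y. \<integral>\<^sup>+x. ennreal (if 0 < x \<and> x < y \<and> y < 1 then C * (y-x) powr r else 0) \<partial>lborel \<partial>lborel)
       = (if r > -1 then ennreal (C / ((r+1)*(r+2))) else \<infinity>)"
proof -
  have inner: "(\<integral>\<^sup>+x. ennreal (if 0 < x \<and> x < y \<and> y < 1 then C * (y-x) powr r else 0) \<partial>lborel)
     = (if r > -1 then ennreal (indicator {0<..<1} y * (C / (r+1) * (y powr (r+1) * (1-y) powr 0)))
        else \<infinity> * indicator {0<..<1} y)" for y
  proof (cases "0 < y \<and> y < 1")
    case True
    then show ?thesis
      using nn_integral_powr_interval[OF C, of y r] by (simp add: indicator_def)
  next
    case False
    then have "(\<lambda>x. ennreal (if 0 < x \<and> x < y \<and> y < 1 then C * (y-x) powr r else 0)) = (\<lambda>x. 0)"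
      by auto
    then show ?thesis
      using False by (auto simp: indicator_def)
  qed
  show ?thesis
  proof (cases "r > -1")
    case True
    have "(\<integral>\<^sup>+y. \<integral>\<^sup>+x. ennreal (if 0 < x \<and> x < y \<and> y < 1 then C * (y-x) powr r else 0) \<partial>lborel \<partial>lborel)
       = ennreal (C / (r+1)) * (\<integral>\<^sup>+y. ennreal (indicator {0<..<1} y * ((y-0) powr (r+1) * (1-y) powr 0)) \<partial>lborel)"
      using True C
      by (subst nn_integral_cmult[symmetric], measurable)
         (auto intro!: nn_integral_cong simp: inner indicator_def ennreal_mult'[symmetric])
    also have "\<dots> = ennreal (C / (r+1)) * ennreal (Beta (r+2) 1)"
      using True by (subst nn_integral_Beta_interval) (auto simp: add.assoc)
    also have "\<dots> = ennreal (C / ((r+1)*(r+2)))"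
      using True C Beta_1_left[of "r+2"] by (simp add: Beta_commute ennreal_mult'[symmetric])
    finally show ?thesis
      using True by simp
  next
    case False
    then have "(\<integral>\<^sup>+y. \<integral>\<^sup>+x. ennreal (if 0 < x \<and> x < y \<and> y < 1 then C * (y-x) powr r else 0) \<partial>lborel \<partial>lborel)
       = (\<integral>\<^sup>+y. \<infinity> * indicator {0<..<(1::real)} y \<partial>lborel)"
      by (simp add: inner)
    then show ?thesis
      using False by (simp add: nn_integral_cmult_indicator)
  qed
qed

lemma nn_integral_PiM_lborel_singleton:
  fixes H :: "real \<Rightarrow> ennreal" and i :: nat
  assumes "H \<in> borel_measurable lborel"
  shows "(\<integral>\<^sup>+x. H (x i) \<partial>(\<Pi>\<^sub>M j\<in>{i}. lborel)) = (\<integral>\<^sup>+z. H z \<partial>lborel)"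
proof -
  interpret product_sigma_finite "\<lambda>_::nat. lborel :: real measure" by standard
  show ?thesis
    using product_nn_integral_singleton[of H i] assms by simp
qed

lemma nn_integral_PiM_lborel_insert:
  fixes f :: "(nat \<Rightarrow> real) \<Rightarrow> ennreal" and I :: "nat set"
  assumes "finite I" "i \<notin> I" "f \<in> borel_measurable (\<Pi>\<^sub>M j\<in>insert i I. lborel)"
    and "\<And>x y. f (x(i:=y)) = g x y"
  shows "(\<integral>\<^sup>+x. f x \<partial>(\<Pi>\<^sub>M j\<in>insert i I. lborel))
       = (\<integral>\<^sup>+x. \<integral>\<^sup>+y. g x y \<partial>lborel \<partial>(\<Pi>\<^sub>M j\<in>I. lborel))"
proof -
  interpret product_sigma_finite "\<lambda>_::nat. lborel :: real measure" by standard
  show ?thesis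
    using product_nn_integral_insert[OF assms(1-3)] assms(4) by simp
qed

lemma nn_integral_PiM_lborel_triangle:
  fixes C r :: real and i j :: nat
  assumes "i \<noteq> j" "C > 0"
  shows "(\<integral>\<^sup>+x. ennreal (if 0 < x i \<and> x i < x j \<and> x j < 1 then C * (x j - x i) powr r else 0)
            \<partial>(\<Pi>\<^sub>M k\<in>{i,j}. lborel))
       = (if r > -1 then ennreal (C / ((r+1)*(r+2))) else \<infinity>)"
proof -
  have "(\<integral>\<^sup>+x. ennreal (if 0 < x i \<and> x i < x j \<and> x j < 1 then C * (x j - x i) powr r else 0)
            \<partial>(\<Pi>\<^sub>M k\<in>{i,j}. lborel))
      = (\<integral>\<^sup>+x. \<integral>\<^sup>+y. ennreal (if 0 < y \<and> y < x j \<and> x j < 1 then C * (x j - y) powr r else 0)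
            \<partial>lborel \<partial>(\<Pi>\<^sub>M k\<in>{j}. lborel))"
    by (rule nn_integral_PiM_lborel_insert;
        ((use assms(1) in \<open>auto simp: fun_upd_apply\<close>; fail) | measurable))
  also have "\<dots> = (\<integral>\<^sup>+z. \<integral>\<^sup>+y. ennreal (if 0 < y \<and> y < z \<and> z < 1 then C * (z - y) powr r else 0)
            \<partial>lborel \<partial>lborel)"
    by (rule nn_integral_PiM_lborel_singleton) measurable
  also have "\<dots> = (if r > -1 then ennreal (C / ((r+1)*(r+2))) else \<infinity>)"
    using assms(2) by (rule nn_integral_triangle_powr)
  finally show ?thesis .
qed

section \<open>Weights on the ordered simplex\<close>

definition simplex_weight2 :: "real \<Rightarrow> (nat \<Rightarrow> real) \<Rightarrow> real" where
  "simplex_weight2 p x = (if 0 < x 0 \<and> x 0 < x 1 \<and> x 1 < 1 then (x 1 - x 0) powr p else 0)"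

definition simplex_weight3 :: "real \<Rightarrow> real \<Rightarrow> real \<Rightarrow> (nat \<Rightarrow> real) \<Rightarrow> real" where
  "simplex_weight3 p01 p12 p02 x =
    (if 0 < x 0 \<and> x 0 < x 1 \<and> x 1 < x 2 \<and> x 2 < 1
     then (x 1 - x 0) powr p01 * (x 2 - x 1) powr p12 * (x 2 - x 0) powr p02 else 0)"

definition simplex_weight4 ::
    "real \<Rightarrow> real \<Rightarrow> real \<Rightarrow> real \<Rightarrow> real \<Rightarrow> real \<Rightarrow> (nat \<Rightarrow> real) \<Rightarrow> real" where
  "simplex_weight4 p01 p12 p23 p02 p13 p03 x =
    (if 0 < x 0 \<and> x 0 < x 1 \<and> x 1 < x 2 \<and> x 2 < x 3 \<and> x 3 < 1
     then (x 1 - x 0) powr p01 * (x 2 - x 1) powr p12 * (x 3 - x 2) powr p23 *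
          (x 2 - x 0) powr p02 * (x 3 - x 1) powr p13 * (x 3 - x 0) powr p03 else 0)"

lemma simplex_weight_nonneg:
  "0 \<le> simplex_weight2 p x"
  "0 \<le> simplex_weight3 p01 p12 p02 x"
  "0 \<le> simplex_weight4 p01 p12 p23 p02 p13 p03 x"
  by (simp_all add: simplex_weight2_def simplex_weight3_def simplex_weight4_def)

lemma simplex_weight4_measurable [measurable]:
  "simplex_weight4 p01 p12 p23 p02 p13 p03 \<in> borel_measurable (cube_measure 4)"
  unfolding simplex_weight4_def cube_measure_def by measurable

lemma nn_integral_simplex_weight2:
  "(\<integral>\<^sup>+x. simplex_weight2 p x \<partial>cube_measure 2)
     = (if p > -1 then ennreal (1 / ((p+1)*(p+2))) else \<infinity>)"
proof -
  have split: "{..<2::nat} = {0,1}" by auto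
  have "(\<integral>\<^sup>+x. simplex_weight2 p x \<partial>cube_measure 2)
      = (\<integral>\<^sup>+x. ennreal (if 0 < x 0 \<and> x 0 < x 1 \<and> x 1 < 1 then 1 * (x 1 - x 0) powr p else 0)
           \<partial>(\<Pi>\<^sub>M k\<in>{0,1::nat}. lborel))"
    unfolding cube_measure_def simplex_weight2_def split mult_1 by (rule refl)
  also have "\<dots> = (if p > -1 then ennreal (1 / ((p+1)*(p+2))) else \<infinity>)"
    by (rule nn_integral_PiM_lborel_triangle) simp_all
  finally show ?thesis .
qed

lemma nn_integral_simplex_weight3:
  fixes p01 p12 p02 :: real
  assumes p01: "p01 > -1" and p12: "p12 > -1"
  shows "(\<integral>\<^sup>+x. simplex_weight3 p01 p12 p02 x \<partial>cube_measure 3)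
       = (if p01+p12+p02 > -2
          then ennreal (Beta (p01+1) (p12+1) / ((p01+p12+p02+2)*(p01+p12+p02+3))) else \<infinity>)"
proof -
  define B where "B = Beta (p01+1) (p12+1)"
  define r where "r = p01+p12+p02+1"
  have B: "B > 0"
    unfolding B_def Beta_def using p01 p12 by simp
  have split: "{..<3::nat} = insert 1 (insert 0 {2})" by auto
  have "(\<integral>\<^sup>+x. simplex_weight3 p01 p12 p02 x \<partial>cube_measure 3)
      = (\<integral>\<^sup>+x. \<integral>\<^sup>+y. ennreal (if (0 < x 0 \<and> x 2 < 1) \<and> x 0 < y \<and> y < x 2
            then (x 2 - x 0) powr p02 * ((y - x 0) powr p01 * (x 2 - y) powr p12) else 0)
          \<partial>lborel \<partial>(\<Pi>\<^sub>M j\<in>{0,2::nat}. lborel))"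
    unfolding cube_measure_def split simplex_weight3_def
    by (rule nn_integral_PiM_lborel_insert;
        ((auto simp: fun_upd_apply ac_simps; fail) | measurable))
  also have "\<dots> = (\<integral>\<^sup>+x. ennreal (if 0 < x 0 \<and> x 0 < x 2 \<and> x 2 < 1 then B * (x 2 - x 0) powr r else 0)
          \<partial>(\<Pi>\<^sub>M j\<in>{0,2::nat}. lborel))"
    using p01 p12
    by (intro nn_integral_cong, subst nn_integral_Beta_kernel)
       (auto simp: B_def r_def powr_add[symmetric] ac_simps)
  also have "\<dots> = (if r > -1 then ennreal (B / ((r+1)*(r+2))) else \<infinity>)"
    using B by (intro nn_integral_PiM_lborel_triangle) simp_all
  finally show ?thesis
    unfolding r_def B_def by (simp add: ac_simps add_ac)
qed

lemma nn_integral_simplex_weight4: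
  fixes p01 p12 p23 p02 p03 :: real
  assumes p01: "p01 > -1" and p12: "p12 > -1" and p23: "p23 > -1"
    and p012: "p01+p12+p02 > -2"
  shows "(\<integral>\<^sup>+x. simplex_weight4 p01 p12 p23 p02 0 p03 x \<partial>cube_measure 4)
       = (if p01+p12+p23+p02+p03 > -3
          then ennreal (Beta (p01+1) (p12+1) * Beta (p01+p12+p02+2) (p23+1) /
                 ((p01+p12+p23+p02+p03+3)*(p01+p12+p23+p02+p03+4))) else \<infinity>)"
proof -
  define B1 where "B1 = Beta (p01+1) (p12+1)"
  define s where "s = p01+p12+p02+1"
  define B2 where "B2 = Beta (s+1) (p23+1)"
  define r where "r = p01+p12+p23+p02+p03+2"
  have B1: "B1 > 0"
    unfolding B1_def Beta_def using p01 p12 by simp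
  have B2: "B2 > 0"
    unfolding B2_def Beta_def s_def using p23 p012 by simp
  have split: "{..<4::nat} = insert 1 (insert 2 (insert 0 {3}))" by auto
  have "(\<integral>\<^sup>+x. simplex_weight4 p01 p12 p23 p02 0 p03 x \<partial>cube_measure 4)
      = (\<integral>\<^sup>+x. \<integral>\<^sup>+y. ennreal (if (0 < x 0 \<and> x 2 < x 3 \<and> x 3 < 1) \<and> x 0 < y \<and> y < x 2
            then ((x 3 - x 2) powr p23 * (x 2 - x 0) powr p02 * (x 3 - x 0) powr p03) *
                 ((y - x 0) powr p01 * (x 2 - y) powr p12) else 0)
          \<partial>lborel \<partial>(\<Pi>\<^sub>M j\<in>{2,0,3::nat}. lborel))"
    unfolding cube_measure_def split simplex_weight4_def
    by (rule nn_integral_PiM_lborel_insert;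
        ((auto simp: fun_upd_apply ac_simps; fail) | measurable))
  also have "\<dots> = (\<integral>\<^sup>+x. ennreal (if 0 < x 0 \<and> x 0 < x 2 \<and> x 2 < x 3 \<and> x 3 < 1
            then (B1 * (x 3 - x 0) powr p03) * ((x 2 - x 0) powr s * (x 3 - x 2) powr p23) else 0)
          \<partial>(\<Pi>\<^sub>M j\<in>{2,0,3::nat}. lborel))"
    using p01 p12
    by (intro nn_integral_cong, subst nn_integral_Beta_kernel)
       (auto simp: B1_def s_def powr_add ac_simps)
  also have "\<dots> = (\<integral>\<^sup>+x. \<integral>\<^sup>+y. ennreal (if (0 < x 0 \<and> x 3 < 1) \<and> x 0 < y \<and> y < x 3
            then (B1 * (x 3 - x 0) powr p03) * ((y - x 0) powr s * (x 3 - y) powr p23) else 0)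
          \<partial>lborel \<partial>(\<Pi>\<^sub>M j\<in>{0,3::nat}. lborel))"
    by (rule nn_integral_PiM_lborel_insert;
        ((auto simp: fun_upd_apply ac_simps; fail) | measurable))
  also have "\<dots> = (\<integral>\<^sup>+x. ennreal (if 0 < x 0 \<and> x 0 < x 3 \<and> x 3 < 1 then (B1 * B2) * (x 3 - x 0) powr r else 0)
          \<partial>(\<Pi>\<^sub>M j\<in>{0,3::nat}. lborel))"
    using p23 p012 B1
    by (intro nn_integral_cong, subst nn_integral_Beta_kernel)
       (auto simp: B2_def s_def r_def powr_add ac_simps)
  also have "\<dots> = (if r > -1 then ennreal ((B1 * B2) / ((r+1)*(r+2))) else \<infinity>)"
    using B1 B2 by (intro nn_integral_PiM_lborel_triangle) simp_all
  finally show ?thesis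
    unfolding r_def B1_def B2_def s_def by (simp add: ac_simps add_ac)
qed

lemma indicator_pair_weight_eq_simplex_weight2:
  assumes "x \<in> space (cube_measure 2)"
  shows "indicator (ordered_simplex 2) x * pair_weight 2 e x = simplex_weight2 (e 0 1) x"
proof -
  have "{(i,j). i < j \<and> j < (2::nat)} = {(0,1)}"
    by (auto simp: numeral_eq_Suc less_Suc_eq)
  moreover have "x \<in> ordered_simplex 2 \<longleftrightarrow> 0 < x 0 \<and> x 0 < x 1 \<and> x 1 < 1"
    using assms unfolding ordered_simplex_def by (auto simp: numeral_eq_Suc less_Suc_eq)
  ultimately show ?thesis
    unfolding pair_weight_def simplex_weight2_def by (simp add: abs_minus_commute)
qed

lemma indicator_pair_weight_eq_simplex_weight3:
  assumes "x \<in> space (cube_measure 3)"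
  shows "indicator (ordered_simplex 3) x * pair_weight 3 e x = simplex_weight3 (e 0 1) (e 1 2) (e 0 2) x"
proof -
  have "{(i,j). i < j \<and> j < (3::nat)} = {(0,1),(0,2),(1,2)}"
    by (auto simp: numeral_eq_Suc less_Suc_eq)
  moreover have "x \<in> ordered_simplex 3 \<longleftrightarrow> 0 < x 0 \<and> x 0 < x 1 \<and> x 1 < x 2 \<and> x 2 < 1"
    using assms unfolding ordered_simplex_def by (auto simp: numeral_eq_Suc less_Suc_eq)
  ultimately show ?thesis
    unfolding pair_weight_def simplex_weight3_def by (simp add: abs_minus_commute ac_simps)
qed

lemma indicator_pair_weight_eq_simplex_weight4:
  assumes "x \<in> space (cube_measure 4)"
  shows "indicator (ordered_simplex 4) x * pair_weight 4 e x
       = simplex_weight4 (e 0 1) (e 1 2) (e 2 3) (e 0 2) (e 1 3) (e 0 3) x"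
proof -
  have "{(i,j). i < j \<and> j < (4::nat)} = {(0,1),(0,2),(0,3),(1,2),(1,3),(2,3)}"
    by (auto simp: numeral_eq_Suc less_Suc_eq)
  moreover have "x \<in> ordered_simplex 4 \<longleftrightarrow> 0 < x 0 \<and> x 0 < x 1 \<and> x 1 < x 2 \<and> x 2 < x 3 \<and> x 3 < 1"
    using assms unfolding ordered_simplex_def by (auto simp: numeral_eq_Suc less_Suc_eq)
  ultimately show ?thesis
    unfolding pair_weight_def simplex_weight4_def by (simp add: abs_minus_commute ac_simps)
qed

lemma simplex_weight3_ge_diameter:
  assumes "p01 \<le> 0" "p12 \<le> 0" "p02 \<le> 0"
  shows "simplex_weight3 0 0 (p01+p12+p02) x \<le> simplex_weight3 p01 p12 p02 x"
proof (cases "0 < x 0 \<and> x 0 < x 1 \<and> x 1 < x 2 \<and> x 2 < 1")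
  case True
  define D where "D = x 2 - x 0"
  have "D powr p01 * D powr p12 * D powr p02 \<le> (x 1 - x 0) powr p01 * (x 2 - x 1) powr p12 * D powr p02"
    using True assms unfolding D_def by (intro mult_right_mono mult_mono powr_mono2') auto
  moreover have "simplex_weight3 0 0 (p01+p12+p02) x = D powr p01 * D powr p12 * D powr p02"
    unfolding simplex_weight3_def if_P[OF True] D_def using True by (simp add: powr_add)
  ultimately show ?thesis
    unfolding simplex_weight3_def if_P[OF True] D_def by linarith
next
  case False
  then show ?thesis
    unfolding simplex_weight3_def if_not_P[OF False] by simp
qed

lemma simplex_weight4_ge_diameter:
  assumes "p01 \<le> 0" "p12 \<le> 0" "p23 \<le> 0" "p02 \<le> 0" "p13 \<le> 0"
  shows "simplex_weight4 0 0 0 0 0 (p01+p12+p23+p02+p13+p03) x \<le> simplex_weight4 p01 p12 p23 p02 p13 p03 x"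
proof (cases "0 < x 0 \<and> x 0 < x 1 \<and> x 1 < x 2 \<and> x 2 < x 3 \<and> x 3 < 1")
  case True
  define D where "D = x 3 - x 0"
  have "D powr p01 * D powr p12 * D powr p23 * D powr p02 * D powr p13 * D powr p03
      \<le> (x 1 - x 0) powr p01 * (x 2 - x 1) powr p12 * (x 3 - x 2) powr p23 *
        (x 2 - x 0) powr p02 * (x 3 - x 1) powr p13 * D powr p03"
    using True assms unfolding D_def
    by (intro mult_right_mono mult_mono powr_mono2' mult_nonneg_nonneg) auto
  moreover have "simplex_weight4 0 0 0 0 0 (p01+p12+p23+p02+p13+p03) x
      = D powr p01 * D powr p12 * D powr p23 * D powr p02 * D powr p13 * D powr p03"
    unfolding simplex_weight4_def if_P[OF True] D_def using True by (simp add: powr_add)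
  ultimately show ?thesis
    unfolding simplex_weight4_def if_P[OF True] D_def by linarith
next
  case False
  then show ?thesis
    unfolding simplex_weight4_def if_not_P[OF False] by simp
qed

lemma simplex_integral_eq_integral:
  assumes "simplex_integrable n e"
    and "\<And>x. x \<in> space (cube_measure n) \<Longrightarrow> indicator (ordered_simplex n) x * pair_weight n e x = G x"
  shows "integrable (cube_measure n) G" "simplex_integral n e = integral\<^sup>L (cube_measure n) G"
proof -
  have "integrable (cube_measure n) (\<lambda>x. indicator (ordered_simplex n) x * pair_weight n e x)"
    using assms(1) unfolding simplex_integrable_def set_integrable_def by simp
  then show "integrable (cube_measure n) G"
    using assms(2) by (simp cong: Bochner_Integration.integrable_cong)
  show "simplex_integral n e = integral\<^sup>L (cube_measure n) G"
    unfolding simplex_integral_def set_lebesgue_integral_def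
    using assms(2) by (simp cong: Bochner_Integration.integral_cong)
qed

lemma nn_integral_eq_simplex_integral:
  assumes "simplex_integrable n e"
    and "\<And>x. x \<in> space (cube_measure n) \<Longrightarrow> indicator (ordered_simplex n) x * pair_weight n e x = G x"
    and "\<And>x. 0 \<le> G x"
  shows "(\<integral>\<^sup>+x. G x \<partial>cube_measure n) = ennreal (simplex_integral n e)"
  using simplex_integral_eq_integral[OF assms(1,2)] assms(3)
  by (simp add: nn_integral_eq_integral)

lemma simplex_integral_nonneg: "0 \<le> simplex_integral n e"
  unfolding simplex_integral_def set_lebesgue_integral_def pair_weight_def
  by (auto intro!: Bochner_Integration.integral_nonneg mult_nonneg_nonneg prod_nonneg split: prod.splits)

section \<open>Termwise integration of the binomial expansion\<close>

lemma pochhammer_eventually_sign: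
  fixes x :: real
  obtains K where "(\<forall>k\<ge>K. 0 \<le> pochhammer x k) \<or> (\<forall>k\<ge>K. pochhammer x k \<le> 0)"
proof -
  obtain K :: nat where K: "real K > - x"
    using reals_Archimedean2 by blast
  have split: "pochhammer x k = pochhammer x K * pochhammer (x + of_nat K) (k - K)" if "k \<ge> K" for k
    using pochhammer_product'[of x K "k-K"] that by simp
  have pos: "pochhammer (x + of_nat K) m \<ge> 0" for m
    using K by (intro less_imp_le pochhammer_pos) simp
  show ?thesis
  proof (cases "pochhammer x K \<ge> 0")
    case True
    then have "\<forall>k\<ge>K. 0 \<le> pochhammer x k"
      using split pos by (metis mult_nonneg_nonneg)
    then show ?thesis using that by blast
  next
    case False
    then have "\<forall>k\<ge>K. pochhammer x k \<le> 0"
      using split pos by (metis linorder_not_le less_imp_le mult_nonpos_nonneg)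
    then show ?thesis using that by blast
  qed
qed

lemma sums_integral_nonneg:
  fixes f :: "nat \<Rightarrow> 'a \<Rightarrow> real"
  assumes nonneg: "\<And>k x. x \<in> space M \<Longrightarrow> 0 \<le> f k x"
    and int: "\<And>k. integrable M (f k)" and intF: "integrable M F"
    and sums: "\<And>x. x \<in> space M \<Longrightarrow> (\<lambda>k. f k x) sums F x"
  shows "(\<lambda>k. integral\<^sup>L M (f k)) sums integral\<^sup>L M F"
proof -
  have [measurable]: "f k \<in> borel_measurable M" for k
    using int by auto
  have F_nonneg: "0 \<le> F x" if "x \<in> space M" for x
    using sums_le[OF _ sums_zero sums[OF that]] nonneg[OF that] by auto
  have "ennreal (integral\<^sup>L M F) = (\<integral>\<^sup>+x. ennreal (F x) \<partial>M)"
    using intF F_nonneg by (intro nn_integral_eq_integral[symmetric]) auto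
  also have "\<dots> = (\<integral>\<^sup>+x. (\<Sum>k. ennreal (f k x)) \<partial>M)"
    using sums nonneg F_nonneg by (intro nn_integral_cong) (simp add: sums_unique sums_ennreal)
  also have "\<dots> = (\<Sum>k. \<integral>\<^sup>+x. ennreal (f k x) \<partial>M)"
    by (rule nn_integral_suminf) measurable
  also have "\<dots> = (\<Sum>k. ennreal (integral\<^sup>L M (f k)))"
    using int nonneg by (simp add: nn_integral_eq_integral)
  finally have "(\<lambda>k. ennreal (integral\<^sup>L M (f k))) sums ennreal (integral\<^sup>L M F)"
    by (metis summableI summable_sums)
  then show ?thesis
    using nonneg F_nonneg by (simp add: integral_nonneg)
qed

lemma sums_integral_eventually_signed:
  fixes g :: "nat \<Rightarrow> real" and \<phi> :: "nat \<Rightarrow> 'a \<Rightarrow> real"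
  assumes nonneg: "\<And>k x. x \<in> space M \<Longrightarrow> 0 \<le> \<phi> k x"
    and int: "\<And>k. integrable M (\<phi> k)" and intF: "integrable M F"
    and sums: "\<And>x. x \<in> space M \<Longrightarrow> (\<lambda>k. g k * \<phi> k x) sums F x"
    and sign: "(\<forall>k\<ge>K. 0 \<le> g k) \<or> (\<forall>k\<ge>K. g k \<le> 0)"
  shows "(\<lambda>k. g k * integral\<^sup>L M (\<phi> k)) sums integral\<^sup>L M F"
proof -
  define \<sigma> :: real where "\<sigma> = (if \<forall>k\<ge>K. 0 \<le> g k then 1 else -1)"
  have \<sigma>: "\<sigma> * \<sigma> = 1" "0 \<le> \<sigma> * g (k + K)" for k
    using sign unfolding \<sigma>_def by auto
  define T where "T x = \<sigma> * (F x - (\<Sum>k<K. g k * \<phi> k x))" for x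
  have int_head: "integrable M (\<lambda>x. \<Sum>k<K. g k * \<phi> k x)"
    using int by auto
  have "(\<lambda>k. integral\<^sup>L M (\<lambda>x. \<sigma> * g (k + K) * \<phi> (k + K) x)) sums integral\<^sup>L M T"
  proof (rule sums_integral_nonneg)
    show "0 \<le> \<sigma> * g (k + K) * \<phi> (k + K) x" if "x \<in> space M" for k x
      using \<sigma>(2) nonneg[OF that] by simp
    show "integrable M T"
      unfolding T_def using intF int_head by auto
    show "(\<lambda>k. \<sigma> * g (k + K) * \<phi> (k + K) x) sums T x" if "x \<in> space M" for x
    proof -
      have "(\<lambda>k. g (k + K) * \<phi> (k + K) x) sums (F x - (\<Sum>k<K. g k * \<phi> k x))"
        using sums[OF that] sums_iff_shift[of "\<lambda>k. g k * \<phi> k x" K] by simp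
      from sums_mult[OF this, of \<sigma>] show ?thesis
        unfolding T_def by (simp add: mult.assoc)
    qed
  qed (use int in auto)
  then have "(\<lambda>k. \<sigma> * (\<sigma> * (g (k + K) * integral\<^sup>L M (\<phi> (k + K))))) sums (\<sigma> * integral\<^sup>L M T)"
    by (intro sums_mult) (simp add: mult.assoc)
  moreover have "\<sigma> * integral\<^sup>L M T = integral\<^sup>L M F - (\<Sum>k<K. g k * integral\<^sup>L M (\<phi> k))"
    unfolding T_def using intF int_head int \<sigma>(1) by (simp add: mult.assoc[symmetric])
  ultimately have "(\<lambda>k. g (k + K) * integral\<^sup>L M (\<phi> (k + K)))
      sums (integral\<^sup>L M F - (\<Sum>k<K. g k * integral\<^sup>L M (\<phi> k)))"
    using \<sigma>(1) by (simp add: mult.assoc[symmetric])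
  then show ?thesis
    using sums_iff_shift[of "\<lambda>k. g k * integral\<^sup>L M (\<phi> k)" K] by simp
qed

lemma simplex_weight4_binomial_sums:
  "(\<lambda>k. pochhammer (-p13) k / fact k *
        simplex_weight4 (p01 + real k) p12 p23 p02 0 (p03 + p13 - real k) x)
     sums simplex_weight4 p01 p12 p23 p02 p13 p03 x"
proof (cases "0 < x 0 \<and> x 0 < x 1 \<and> x 1 < x 2 \<and> x 2 < x 3 \<and> x 3 < 1")
  case True
  define u where "u = x 1 - x 0"
  define v where "v = x 3 - x 0"
  define Q where "Q = u powr p01 * (x 2 - x 1) powr p12 * (x 3 - x 2) powr p23 * (x 2 - x 0) powr p02 * v powr p03"
  have uv: "0 < u" "u < v"
    using True unfolding u_def v_def by auto
  have "(\<lambda>k. (p13 gchoose k) * (-u)^k * v powr (p13 - real k)) sums (-u + v) powr p13"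
    using uv by (intro gen_binomial_real') simp
  then have "(\<lambda>k. (p13 gchoose k) * (-u)^k * v powr (p13 - real k) * Q) sums ((x 3 - x 1) powr p13 * Q)"
    unfolding u_def v_def by (intro sums_mult2) simp
  moreover have "(p13 gchoose k) * (-u)^k * v powr (p13 - real k) * Q
      = pochhammer (-p13) k / fact k * simplex_weight4 (p01 + real k) p12 p23 p02 0 (p03 + p13 - real k) x" for k
  proof -
    have "(p13 gchoose k) * (-u)^k = ((-1)^k * pochhammer (-p13) k / fact k) * ((-1)^k * u^k)"
      by (simp only: gbinomial_pochhammer power_minus[of u k])
    also have "\<dots> = ((-1)^k * (-1)^k) * (pochhammer (-p13) k / fact k * u^k)"
      by (simp only: ac_simps times_divide_eq_left times_divide_eq_right)
    finally have "(p13 gchoose k) * (-u)^k = pochhammer (-p13) k / fact k * u^k"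
      by (simp only: minus_one_mult_self mult_1_left)
    moreover have "u powr (p01 + real k) = u powr p01 * u^k"
      using uv by (simp add: powr_add powr_realpow)
    moreover have "v powr (p03 + p13 - real k) = v powr p03 * v powr (p13 - real k)"
      by (simp add: powr_add[symmetric] add_diff_eq)
    moreover have "(x 3 - x 1) powr (0::real) = 1"
      using True by simp
    ultimately show ?thesis
      unfolding simplex_weight4_def if_P[OF True] Q_def u_def[symmetric] v_def[symmetric]
      by (simp add: ac_simps)
  qed
  moreover have "(x 3 - x 1) powr p13 * Q = simplex_weight4 p01 p12 p23 p02 p13 p03 x"
    unfolding simplex_weight4_def if_P[OF True] Q_def u_def[symmetric] v_def[symmetric]
    by (simp only: ac_simps)
  ultimately show ?thesis
    by simp
next
  case False
  then show ?thesis
    unfolding simplex_weight4_def if_not_P[OF False] by simp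
qed

lemma Beta_shift_pochhammer:
  fixes x y :: real
  assumes "x > 0" "y > 0"
  shows "Beta (x + real k) y = pochhammer x k / pochhammer (x + y) k * Beta x y"
proof -
  have Gamma_shift: "Gamma (z + real k) = pochhammer z k * Gamma z" if "z > 0" for z :: real
  proof -
    have "z \<notin> \<int>\<^sub>\<le>\<^sub>0"
      using that by (auto elim!: nonpos_Ints_cases)
    then show ?thesis
      using pochhammer_Gamma[of z k] Gamma_nonzero[of z] by (simp add: field_simps)
  qed
  have "Gamma (x + real k + y) = pochhammer (x + y) k * Gamma (x + y)"
    using Gamma_shift[of "x + y"] assms by (simp add: add_ac)
  moreover have "pochhammer (x + y) k > 0"
    using assms by (intro pochhammer_pos) simp
  ultimately show ?thesis
    unfolding Beta_def using Gamma_shift[of x] assms by simp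
qed

lemma hyp3F2_Beta_series:
  fixes \<alpha> x1 y1 x2 y2 L :: real
  assumes "x1 > 0" "y1 > 0" "x2 > 0" "y2 > 0"
    and "(\<lambda>k. pochhammer \<alpha> k / fact k * (Beta (x1 + real k) y1 * Beta (x2 + real k) y2)) sums L"
  shows "L = Beta x1 y1 * Beta x2 y2 * hyp3F2 \<alpha> x1 x2 (x1 + y1) (x2 + y2) 1"
proof -
  define C where "C = Beta x1 y1 * Beta x2 y2"
  define t where "t k = pochhammer \<alpha> k * pochhammer x1 k * pochhammer x2 k /
             (pochhammer (x1 + y1) k * pochhammer (x2 + y2) k) * 1 ^ k / fact k" for k
  have "C > 0"
    unfolding C_def Beta_def using assms by simp
  have "pochhammer \<alpha> k / fact k * (Beta (x1 + real k) y1 * Beta (x2 + real k) y2) = C * t k" for k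
    unfolding C_def t_def using assms by (simp add: Beta_shift_pochhammer mult_ac)
  then have "(\<lambda>k. C * t k / C) sums (L / C)"
    using assms(5) by (intro sums_divide) simp
  then have "t sums (L / C)"
    using \<open>C > 0\<close> by simp
  then show ?thesis
    unfolding hyp3F2_def t_def[symmetric] C_def[symmetric] using \<open>C > 0\<close> by (simp add: sums_iff)
qed

section \<open>The integrals for n = 2, 3, 4\<close>

lemma simplex_integral2:
  assumes "simplex_integrable 2 e"
  shows "simplex_integral 2 e = 1 / ((e 0 1 + 1)*(e 0 1 + 2))"
proof -
  have nn: "(\<integral>\<^sup>+x. simplex_weight2 (e 0 1) x \<partial>cube_measure 2) = ennreal (simplex_integral 2 e)"
    by (rule nn_integral_eq_simplex_integral[OF assms indicator_pair_weight_eq_simplex_weight2 simplex_weight_nonneg(1)])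
  then have "e 0 1 > -1"
    using nn_integral_simplex_weight2[of "e 0 1"] by (auto split: if_splits)
  then show ?thesis
    using nn nn_integral_simplex_weight2[of "e 0 1"] simplex_integral_nonneg[of 2 e]
    by (simp add: ennreal_inj)
qed

lemma simplex_weight3_total_exponent:
  fixes a c :: real
  assumes finite: "(\<integral>\<^sup>+x. simplex_weight3 a a c x \<partial>cube_measure 3) \<noteq> \<infinity>"
    and sign: "(0 \<le> a \<and> 0 \<le> c) \<or> (a \<le> 0 \<and> c \<le> 0)"
  shows "2*a+c > -2"
proof (rule ccontr)
  assume diverges: "\<not> 2*a+c > -2"
  with sign have "a \<le> 0" "c \<le> 0" by auto
  then have "(\<integral>\<^sup>+x. simplex_weight3 0 0 (a+a+c) x \<partial>cube_measure 3)
      \<le> (\<integral>\<^sup>+x. simplex_weight3 a a c x \<partial>cube_measure 3)"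
    by (intro nn_integral_mono ennreal_leI simplex_weight3_ge_diameter)
  moreover have "(\<integral>\<^sup>+x. simplex_weight3 0 0 (a+a+c) x \<partial>cube_measure 3) = \<infinity>"
    using diverges by (simp add: nn_integral_simplex_weight3)
  ultimately show False
    using finite by (simp add: top_unique)
qed

lemma simplex_integral3:
  fixes a c :: real
  assumes int: "simplex_integrable 3 e" and e: "e 0 1 = a" "e 1 2 = a" "e 0 2 = c"
    and sign: "(0 \<le> a \<and> 0 \<le> c) \<or> (a \<le> 0 \<and> c \<le> 0)"
  shows "simplex_integral 3 e = 1 / ((2*a+c+2)*(2*a+c+3)) * (Gamma (a+1) ^ 2 / Gamma (2*a+2))"
proof -
  have nn: "(\<integral>\<^sup>+x. simplex_weight3 a a c x \<partial>cube_measure 3) = ennreal (simplex_integral 3 e)"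
    using nn_integral_eq_simplex_integral[OF int indicator_pair_weight_eq_simplex_weight3 simplex_weight_nonneg(2)]
    unfolding e .
  then have total: "2*a+c > -2"
    using sign by (intro simplex_weight3_total_exponent) auto
  have "a > -1"
    using sign total by linarith
  have "ennreal (simplex_integral 3 e) = ennreal (Beta (a+1) (a+1) / ((2*a+c+2)*(2*a+c+3)))"
    using nn nn_integral_simplex_weight3[of a a c] \<open>a > -1\<close> total
    by (simp add: algebra_simps)
  moreover have "Beta (a+1) (a+1) > 0"
    using \<open>a > -1\<close> unfolding Beta_def by simp
  ultimately have "simplex_integral 3 e = Beta (a+1) (a+1) / ((2*a+c+2)*(2*a+c+3))"
    using total simplex_integral_nonneg[of 3 e] by (subst (asm) ennreal_inj) auto
  moreover have "Beta (a+1) (a+1) = Gamma (a+1) ^ 2 / Gamma (2*a+2)"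
  proof -
    have "a+1+(a+1) = 2*a+2"
      by simp
    then show ?thesis
      unfolding Beta_def by (simp add: power2_eq_square)
  qed
  ultimately show ?thesis
    by simp
qed

lemma simplex_weight4_total_exponent:
  fixes a c d :: real
  assumes finite: "(\<integral>\<^sup>+x. simplex_weight4 a a a c c d x \<partial>cube_measure 4) \<noteq> \<infinity>"
    and sign: "(0 \<le> a \<and> 0 \<le> c \<and> 0 \<le> d) \<or> (a \<le> 0 \<and> c \<le> 0 \<and> d \<le> 0)"
  shows "3*a+2*c+d > -3"
proof (rule ccontr)
  assume diverges: "\<not> 3*a+2*c+d > -3"
  with sign have "a \<le> 0" "c \<le> 0" by auto
  then have "(\<integral>\<^sup>+x. simplex_weight4 0 0 0 0 0 (a+a+a+c+c+d) x \<partial>cube_measure 4)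
      \<le> (\<integral>\<^sup>+x. simplex_weight4 a a a c c d x \<partial>cube_measure 4)"
    by (intro nn_integral_mono ennreal_leI simplex_weight4_ge_diameter)
  moreover have "(\<integral>\<^sup>+x. simplex_weight4 0 0 0 0 0 (a+a+a+c+c+d) x \<partial>cube_measure 4) = \<infinity>"
    using diverges by (simp add: nn_integral_simplex_weight4)
  ultimately show False
    using finite by (simp add: top_unique)
qed

lemma integral_simplex_weight4_sums:
  fixes a c d :: real
  assumes a: "a > -1" and ac: "2*a+c > -2" and total: "3*a+2*c+d > -3"
    and int: "integrable (cube_measure 4) (simplex_weight4 a a a c c d)"
  shows "(\<lambda>k. pochhammer (-c) k / fact k * (Beta (a + 1 + real k) (a + 1) * Beta (2*a+c+2 + real k) (a + 1)))
     sums ((3*a+2*c+d+3) * (3*a+2*c+d+4) * integral\<^sup>L (cube_measure 4) (simplex_weight4 a a a c c d))"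
proof -
  define D where "D = (3*a+2*c+d+3) * (3*a+2*c+d+4)"
  have "D > 0"
    unfolding D_def using total by simp
  define \<phi> where "\<phi> k = simplex_weight4 (a + real k) a a c 0 (d + c - real k)" for k :: nat
  have nn_\<phi>: "(\<integral>\<^sup>+x. \<phi> k x \<partial>cube_measure 4)
      = ennreal (Beta (a + 1 + real k) (a + 1) * Beta (2*a+c+2 + real k) (a + 1) / D)" for k
    unfolding \<phi>_def D_def using a ac total
    by (subst nn_integral_simplex_weight4) (auto simp: algebra_simps)
  have int_\<phi>: "integrable (cube_measure 4) (\<phi> k)" for k
    using nn_\<phi>[of k] unfolding \<phi>_def
    by (intro integrableI_nonneg) (auto simp: simplex_weight_nonneg)
  have integral_\<phi>: "integral\<^sup>L (cube_measure 4) (\<phi> k)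
      = Beta (a + 1 + real k) (a + 1) * Beta (2*a+c+2 + real k) (a + 1) / D" for k
    using nn_\<phi>[of k] int_\<phi>[of k] \<open>D > 0\<close> a ac
    by (subst integral_eq_nn_integral) (auto simp: \<phi>_def simplex_weight_nonneg Beta_def)
  obtain K where K: "(\<forall>k\<ge>K. 0 \<le> pochhammer (-c) k) \<or> (\<forall>k\<ge>K. pochhammer (-c) k \<le> 0)"
    using pochhammer_eventually_sign by blast
  have "(\<lambda>k. pochhammer (-c) k / fact k * integral\<^sup>L (cube_measure 4) (\<phi> k))
      sums integral\<^sup>L (cube_measure 4) (simplex_weight4 a a a c c d)"
  proof (rule sums_integral_eventually_signed[OF _ int_\<phi> int])
    show "0 \<le> \<phi> k x" for k x
      unfolding \<phi>_def by (rule simplex_weight_nonneg)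
    show "(\<lambda>k. pochhammer (-c) k / fact k * \<phi> k x) sums simplex_weight4 a a a c c d x" for x
      unfolding \<phi>_def by (rule simplex_weight4_binomial_sums)
    show "(\<forall>k\<ge>K. 0 \<le> pochhammer (-c) k / fact k) \<or> (\<forall>k\<ge>K. pochhammer (-c) k / fact k \<le> 0)"
      using K by (auto simp: divide_nonpos_pos)
  qed
  from sums_mult[OF this, of D] show ?thesis
    unfolding integral_\<phi> D_def[symmetric] using \<open>D > 0\<close> by simp
qed

lemma simplex_integral4:
  fixes a c d :: real
  assumes int: "simplex_integrable 4 e"
    and e: "e 0 1 = a" "e 1 2 = a" "e 2 3 = a" "e 0 2 = c" "e 1 3 = c" "e 0 3 = d"
    and sign: "(0 \<le> a \<and> 0 \<le> c \<and> 0 \<le> d) \<or> (a \<le> 0 \<and> c \<le> 0 \<and> d \<le> 0)"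
  shows "simplex_integral 4 e = 1 / ((3*a+2*c+d+3) * (3*a+2*c+d+4)) *
           (Gamma (a+1) ^ 2 / Gamma (2*a+2)) * (Gamma (a+1) * Gamma (2*a+c+2) / Gamma (3*a+c+3)) *
           hyp3F2 (-c) (a+1) (2*a+c+2) (2*a+2) (3*a+c+3) 1"
proof -
  have G: "integrable (cube_measure 4) (simplex_weight4 a a a c c d)"
      "simplex_integral 4 e = integral\<^sup>L (cube_measure 4) (simplex_weight4 a a a c c d)"
    using simplex_integral_eq_integral[OF int indicator_pair_weight_eq_simplex_weight4] unfolding e by auto
  have "(\<integral>\<^sup>+x. simplex_weight4 a a a c c d x \<partial>cube_measure 4) = ennreal (simplex_integral 4 e)"
    using nn_integral_eq_simplex_integral[OF int indicator_pair_weight_eq_simplex_weight4 simplex_weight_nonneg(3)]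
    unfolding e .
  then have total: "3*a+2*c+d > -3"
    using sign by (intro simplex_weight4_total_exponent) auto
  then have a: "a > -1" and ac: "2*a+c > -2"
    using sign by linarith+
  define D where "D = (3*a+2*c+d+3) * (3*a+2*c+d+4)"
  have "D > 0"
    unfolding D_def using total by simp
  have "D * simplex_integral 4 e = Beta (a+1) (a+1) * Beta (2*a+c+2) (a+1) *
      hyp3F2 (-c) (a+1) (2*a+c+2) (a+1+(a+1)) (2*a+c+2+(a+1)) 1"
    using integral_simplex_weight4_sums[OF a ac total G(1)] a ac
    unfolding D_def G(2) by (intro hyp3F2_Beta_series) auto
  moreover have args: "a+1+(a+1) = 2*a+2" "2*a+c+2+(a+1) = 3*a+c+3"
    by simp_all
  ultimately have "simplex_integral 4 e = 1 / D * Beta (a+1) (a+1) * Beta (2*a+c+2) (a+1) *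
      hyp3F2 (-c) (a+1) (2*a+c+2) (2*a+2) (3*a+c+3) 1"
    using \<open>D > 0\<close> by (simp add: field_simps)
  moreover have "Beta (a+1) (a+1) = Gamma (a+1) ^ 2 / Gamma (2*a+2)"
    unfolding Beta_def args by (simp add: power2_eq_square)
  moreover have "Beta (2*a+c+2) (a+1) = Gamma (a+1) * Gamma (2*a+c+2) / Gamma (3*a+c+3)"
    unfolding Beta_def args by (simp add: mult.commute)
  ultimately show ?thesis
    unfolding D_def by simp
qed

lemma I_int_2:
  assumes "simplex_integrable 2 (I_exp lam 2)"
  shows "I_int 2 lam = 1 / ((1 + 2*lam) * (2 + 2*lam))"
  using simplex_integral2[OF assms] unfolding I_int_def by (simp add: I_exp_def algebra_simps)

lemma J_int_2:
  assumes "simplex_integrable 2 (J_exp lam 2)"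
  shows "J_int 2 lam = 1 / ((1 + 2*lam) * (2 + 2*lam))"
  using simplex_integral2[OF assms] unfolding J_int_def by (simp add: J_exp_def algebra_simps)

lemma I_int_3:
  assumes "simplex_integrable 3 (I_exp lam 3)"
  shows "I_int 3 lam = 1 / ((2 + 8*lam) * (3 + 8*lam)) * (Gamma (1 + 2*lam) ^ 2 / Gamma (2 + 4*lam))"
  using simplex_integral3[OF assms, of "2*lam" "4*lam"] linear[of 0 lam] unfolding I_int_def
  by (simp add: I_exp_def algebra_simps)

lemma J_int_3:
  assumes "simplex_integrable 3 (J_exp lam 3)"
  shows "J_int 3 lam = 1 / ((2 + 10*lam) * (3 + 10*lam)) * (Gamma (1 + 4*lam) ^ 2 / Gamma (2 + 8*lam))"
  using simplex_integral3[OF assms, of "4*lam" "2*lam"] linear[of 0 lam] unfolding J_int_def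
  by (simp add: J_exp_def algebra_simps)

lemma I_int_4:
  assumes "simplex_integrable 4 (I_exp lam 4)"
  shows "I_int 4 lam = 1 / ((3 + 22*lam) * (4 + 22*lam)) *
         (Gamma (1 + 2*lam) ^ 2 / Gamma (2 + 4*lam)) *
         (Gamma (1 + 2*lam) * Gamma (2 + 8*lam) / Gamma (3 + 10*lam)) *
         hyp3F2 (-4*lam) (1 + 2*lam) (2 + 8*lam) (2 + 4*lam) (3 + 10*lam) 1"
  using simplex_integral4[OF assms, of "2*lam" "4*lam" "8*lam"] linear[of 0 lam] unfolding I_int_def
  by (simp add: I_exp_def algebra_simps)

lemma J_int_4:
  assumes "simplex_integrable 4 (J_exp lam 4)"
  shows "J_int 4 lam = 1 / ((3 + 34*lam) * (4 + 34*lam)) *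
         (Gamma (1 + 8*lam) ^ 2 / Gamma (2 + 16*lam)) *
         (Gamma (1 + 8*lam) * Gamma (2 + 20*lam) / Gamma (3 + 28*lam)) *
         hyp3F2 (-4*lam) (1 + 8*lam) (2 + 20*lam) (2 + 16*lam) (3 + 28*lam) 1"
  using simplex_integral4[OF assms, of "8*lam" "4*lam" "2*lam"] linear[of 0 lam] unfolding J_int_def
  by (simp add: J_exp_def algebra_simps)

theorem proposition1:
  fixes lam :: real
  shows
   "(simplex_integrable 2 (I_exp lam 2) \<longrightarrow>
       I_int 2 lam = 1 / ((1 + 2*lam) * (2 + 2*lam))) \<and>
    (simplex_integrable 2 (J_exp lam 2) \<longrightarrow>
       J_int 2 lam = 1 / ((1 + 2*lam) * (2 + 2*lam))) \<and>
    (simplex_integrable 3 (I_exp lam 3) \<longrightarrow>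
       I_int 3 lam = 1 / ((2 + 8*lam) * (3 + 8*lam)) *
         (Gamma (1 + 2*lam) ^ 2 / Gamma (2 + 4*lam))) \<and>
    (simplex_integrable 4 (I_exp lam 4) \<longrightarrow>
       I_int 4 lam = 1 / ((3 + 22*lam) * (4 + 22*lam)) *
         (Gamma (1 + 2*lam) ^ 2 / Gamma (2 + 4*lam)) *
         (Gamma (1 + 2*lam) * Gamma (2 + 8*lam) / Gamma (3 + 10*lam)) *
         hyp3F2 (-4*lam) (1 + 2*lam) (2 + 8*lam) (2 + 4*lam) (3 + 10*lam) 1) \<and>
    (simplex_integrable 3 (J_exp lam 3) \<longrightarrow>
       J_int 3 lam = 1 / ((2 + 10*lam) * (3 + 10*lam)) *
         (Gamma (1 + 4*lam) ^ 2 / Gamma (2 + 8*lam))) \<and>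
    (simplex_integrable 4 (J_exp lam 4) \<longrightarrow>
       J_int 4 lam = 1 / ((3 + 34*lam) * (4 + 34*lam)) *
         (Gamma (1 + 8*lam) ^ 2 / Gamma (2 + 16*lam)) *
         (Gamma (1 + 8*lam) * Gamma (2 + 20*lam) / Gamma (3 + 28*lam)) *
         hyp3F2 (-4*lam) (1 + 8*lam) (2 + 20*lam) (2 + 16*lam) (3 + 28*lam) 1)"
  using I_int_2 J_int_2 I_int_3 I_int_4 J_int_3 J_int_4 by blast

end
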